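(* Let $R$ be a commutative ring with identity such that $4\le \gamma_t(\Gamma(R))<\infty$. Then $\gamma(\Gamma(R))=\gamma_t(\Gamma(R))$.
   Context: All rings are commutative with identity. The zero-divisor graph $\Gamma(R)$ has vertex set $Z(R)^*$ (nonzero zero-divisors); distinct $r,s$ are adjacent iff $rs=0$, and $x$ is adjacent to itself iff $x^2=0$. A dominating set is $X\subseteq Z(R)^*$ such that every vertex not in $X$ is adjacent to some element of $X$; a total dominating set is $X$ such that every vertex (including those in $X$) is adjacent to some element of $X$ (self-adjacency counts). $\gamma,\gamma_t$ are the respective minimum cardinalities. *)

theory Defs
  imports Main "HOL-Library.Extended_Nat"
begin

definition zd_vertices :: "'a::comm_ring_1 set" where
  "zd_vertices = {x. x \<noteq> 0 \<and> (\<exists>y. y \<noteq> 0 \<and> x * y = 0)}"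

definition zd_adj :: "'a::comm_ring_1 \<Rightarrow> 'a \<Rightarrow> bool" where
  "zd_adj r s = (if r = s then r * r = 0 else r * s = 0)"

definition zd_dominating :: "'a::comm_ring_1 set \<Rightarrow> bool" where
  "zd_dominating X \<longleftrightarrow> X \<subseteq> zd_vertices \<and>
     (\<forall>v \<in> zd_vertices - X. \<exists>x \<in> X. zd_adj v x)"

definition zd_total_dominating :: "'a::comm_ring_1 set \<Rightarrow> bool" where
  "zd_total_dominating X \<longleftrightarrow> X \<subseteq> zd_vertices \<and>
     (\<forall>v \<in> zd_vertices. \<exists>x \<in> X. zd_adj v x)"

text \<open>Domination numbers as extended naturals (infinity if no finite such set exists).\<close>
definition zd_gamma :: "'a::comm_ring_1 itself \<Rightarrow> enat" where
  "zd_gamma _ = (INF X \<in> {X :: 'a set. zd_dominating X \<and> finite X}. enat (card X))"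

definition zd_gamma_t :: "'a::comm_ring_1 itself \<Rightarrow> enat" where
  "zd_gamma_t _ = (INF X \<in> {X :: 'a set. zd_total_dominating X \<and> finite X}. enat (card X))"

end

theory Submission
  imports Defs
begin

(* Since x is adjacent to itself exactly when x^2 = 0, adjacency in Gamma(R) is simply
   rs = 0, and a dominating set D is total dominating iff no element of D is isolated in D.
   Exchanging an element f of D for some g with ann f \<subseteq> ann g (for instance a nonzero
   multiple of f) keeps every vertex other than f dominated. If d \<in> D is isolated and D has
   another element d', one of three such exchanges, chosen according to whether
   ann d \<subseteq> ann d', whether d' is isolated and whether ann d' \<subseteq> ann d, brings a neighbour
   of d into D without enlarging D or creating new isolated elements; for D = {d} one adds a
   neighbour of d instead. Hence gamma_t <= max 2 gamma, and as gamma <= gamma_t, the bound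
   gamma_t >= 4 forces equality. *)

lemma zd_adj_iff_mult_eq_0: "zd_adj r s \<longleftrightarrow> r * s = 0"
  by (simp add: zd_adj_def)

lemma zd_dominating_iff:
  "zd_dominating X \<longleftrightarrow> X \<subseteq> zd_vertices \<and> (\<forall>v \<in> zd_vertices - X. \<exists>x\<in>X. v * x = 0)"
  by (simp add: zd_dominating_def zd_adj_iff_mult_eq_0)

lemma zd_verticesI: "x \<noteq> 0 \<Longrightarrow> y \<noteq> 0 \<Longrightarrow> x * y = 0 \<Longrightarrow> (x::'a::comm_ring_1) \<in> zd_vertices"
  unfolding zd_vertices_def by blast

lemma zd_vertices_neighbour:
  assumes "(d::'a::comm_ring_1) \<in> zd_vertices"
  obtains z where "z \<in> zd_vertices" "d * z = 0"
proof -
  obtain z where "z \<noteq> 0" "d * z = 0" "d \<noteq> 0"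
    using assms unfolding zd_vertices_def by blast
  then show thesis
    using that zd_verticesI[of z d] by (simp add: mult.commute)
qed

definition zd_isolated :: "'a::comm_ring_1 set \<Rightarrow> 'a set" where
  "zd_isolated D = {d \<in> D. \<forall>x\<in>D. d * x \<noteq> 0}"

lemma zd_total_dominating_iff:
  "zd_total_dominating X \<longleftrightarrow> zd_dominating X \<and> zd_isolated X = {}"
  unfolding zd_total_dominating_def zd_dominating_def zd_isolated_def zd_adj_iff_mult_eq_0
  by blast

lemma zd_isolated_subset: "zd_isolated D \<subseteq> D"
  unfolding zd_isolated_def by blast

lemma zd_isolated_mult_eq_0_notin: "d \<in> zd_isolated D \<Longrightarrow> d * x = 0 \<Longrightarrow> x \<notin> D"
  unfolding zd_isolated_def by blast

lemma zd_dominating_exchange: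
  fixes D D' :: "'a::comm_ring_1 set"
  assumes dom: "zd_dominating D" and sub: "D' \<subseteq> zd_vertices"
    and ann: "\<And>f. f \<in> D - D' \<Longrightarrow> \<exists>g\<in>D'. \<forall>v. v * f = 0 \<longrightarrow> v * g = 0"
    and removed: "\<And>f. f \<in> zd_isolated D - D' \<Longrightarrow> \<exists>g\<in>D'. f * g = 0"
    and new: "\<And>e. e \<in> D' - D \<Longrightarrow> \<exists>g\<in>D'. e * g = 0"
    and d: "d \<in> zd_isolated D" and g: "g \<in> D'" "d * g = 0"
  shows "zd_dominating D'" and "zd_isolated D' \<subset> zd_isolated D"
proof -
  have inherit: "\<exists>g\<in>D'. v * g = 0" if "f \<in> D" "v * f = 0" for v f
    using that ann by (cases "f \<in> D'") auto
  show "zd_dominating D'"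
    unfolding zd_dominating_iff
  proof (intro conjI sub ballI)
    fix v assume v: "v \<in> zd_vertices - D'"
    show "\<exists>x\<in>D'. v * x = 0"
    proof (cases "v \<in> zd_isolated D")
      case True
      then show ?thesis using removed v by blast
    next
      case False
      then obtain f where "f \<in> D" "v * f = 0"
        using v dom unfolding zd_dominating_iff zd_isolated_def by blast
      then show ?thesis using inherit by blast
    qed
  qed
  have "zd_isolated D' \<subseteq> zd_isolated D"
    using new inherit unfolding zd_isolated_def by blast
  moreover have "d \<notin> zd_isolated D'"
    using g unfolding zd_isolated_def by blast
  ultimately show "zd_isolated D' \<subset> zd_isolated D"
    using d by blast
qed

lemma zd_isolated_insert_neighbour:
  fixes D :: "'a::comm_ring_1 set"
  assumes fin: "finite D" and dom: "zd_dominating D" and d: "d \<in> zd_isolated D"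
  obtains D' where "finite D'" "zd_dominating D'" "card D' \<le> Suc (card D)"
    "zd_isolated D' \<subset> zd_isolated D"
proof -
  have dD: "d \<in> D" using d zd_isolated_subset by blast
  obtain z where zV: "z \<in> zd_vertices" and dz: "d * z = 0"
    using zd_vertices_neighbour dom dD unfolding zd_dominating_iff by blast
  define D' where "D' = insert z D"
  have sub: "D' \<subseteq> zd_vertices"
    using dom zV unfolding D'_def zd_dominating_iff by blast
  have ann: "\<exists>g\<in>D'. \<forall>v. v * f = 0 \<longrightarrow> v * g = 0" if "f \<in> D - D'" for f
    using that unfolding D'_def by blast
  have removed: "\<exists>g\<in>D'. f * g = 0" if "f \<in> zd_isolated D - D'" for f
    using that unfolding D'_def zd_isolated_def by blast
  have new: "\<exists>g\<in>D'. e * g = 0" if "e \<in> D' - D" for e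
    using that dD dz unfolding D'_def by (auto simp: mult.commute)
  have "zd_dominating D'" "zd_isolated D' \<subset> zd_isolated D"
    using zd_dominating_exchange[OF dom sub ann removed new d, of z] dz
    unfolding D'_def by auto
  moreover have "card D' \<le> Suc (card D)"
    unfolding D'_def using fin by (simp add: card_insert_if)
  ultimately show thesis
    using that[of D'] fin unfolding D'_def by simp
qed

lemma zd_isolated_replace_by_neighbour:
  fixes D :: "'a::comm_ring_1 set"
  assumes fin: "finite D" and dom: "zd_dominating D" and d: "d \<in> zd_isolated D"
    and d': "d' \<in> D" "d' \<noteq> d" and ann_le: "\<forall>v. v * d = 0 \<longrightarrow> v * d' = 0"
  obtains D' where "finite D'" "zd_dominating D'" "card D' \<le> card D"
    "zd_isolated D' \<subset> zd_isolated D"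
proof -
  have dD: "d \<in> D" using d zd_isolated_subset by blast
  obtain z where zV: "z \<in> zd_vertices" and dz: "d * z = 0"
    using zd_vertices_neighbour dom dD unfolding zd_dominating_iff by blast
  have zD: "z \<notin> D" using zd_isolated_mult_eq_0_notin[OF d dz] .
  define D' where "D' = insert z (D - {d})"
  have sub: "D' \<subseteq> zd_vertices"
    using dom zV unfolding D'_def zd_dominating_iff by blast
  have ann: "\<exists>g\<in>D'. \<forall>v. v * f = 0 \<longrightarrow> v * g = 0" if "f \<in> D - D'" for f
    using that d' ann_le unfolding D'_def by blast
  have removed: "\<exists>g\<in>D'. f * g = 0" if "f \<in> zd_isolated D - D'" for f
    using that dz zd_isolated_def unfolding D'_def by auto
  have new: "\<exists>g\<in>D'. e * g = 0" if "e \<in> D' - D" for e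
    using that d' ann_le dz unfolding D'_def by (auto simp: mult.commute)
  have "zd_dominating D'" "zd_isolated D' \<subset> zd_isolated D"
    using zd_dominating_exchange[OF dom sub ann removed new d, of z] dz
    unfolding D'_def by auto
  moreover have "card D' = card D"
    unfolding D'_def using fin dD zD card_Suc_Diff1[OF fin dD] by simp
  ultimately show thesis
    using that[of D'] fin unfolding D'_def by simp
qed

lemma zd_isolated_replace_by_multiple:
  fixes D :: "'a::comm_ring_1 set"
  assumes fin: "finite D" and dom: "zd_dominating D" and d: "d \<in> zd_isolated D"
    and d': "d' \<in> D" "d' \<notin> zd_isolated D" and z: "z * d = 0" "d' * z \<noteq> 0"
  obtains D' where "finite D'" "zd_dominating D'" "card D' \<le> card D"
    "zd_isolated D' \<subset> zd_isolated D"
proof -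
  define x where "x = d' * z"
  have dD: "d \<in> D" using d zd_isolated_subset by blast
  have "d \<noteq> 0" using dom dD unfolding zd_dominating_iff zd_vertices_def by blast
  moreover have xd: "x * d = 0" unfolding x_def using z by (simp add: mult.assoc)
  ultimately have xV: "x \<in> zd_vertices" using zd_verticesI z unfolding x_def by blast
  have xD: "x \<notin> D" using zd_isolated_mult_eq_0_notin[OF d] xd by (simp add: mult.commute)
  define D' where "D' = insert x (D - {d'})"
  have sub: "D' \<subseteq> zd_vertices"
    using dom xV unfolding D'_def zd_dominating_iff by blast
  have ann: "\<exists>g\<in>D'. \<forall>v. v * f = 0 \<longrightarrow> v * g = 0" if "f \<in> D - D'" for f
  proof -
    have "f = d'" using that unfolding D'_def by blast
    then show ?thesis unfolding D'_def x_def by (auto simp: mult.assoc[symmetric])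
  qed
  have removed: "\<exists>g\<in>D'. f * g = 0" if "f \<in> zd_isolated D - D'" for f
    using that d' unfolding D'_def zd_isolated_def by blast
  have new: "\<exists>g\<in>D'. e * g = 0" if "e \<in> D' - D" for e
    using that xd d d' dD unfolding D'_def by auto
  have "zd_dominating D'" "zd_isolated D' \<subset> zd_isolated D"
    using zd_dominating_exchange[OF dom sub ann removed new d, of x] xd
    unfolding D'_def by (auto simp: mult.commute)
  moreover have "card D' = card D"
    unfolding D'_def using fin d' xD card_Suc_Diff1[OF fin d'(1)] by simp
  ultimately show thesis
    using that[of D'] fin unfolding D'_def by simp
qed

lemma card_insert_insert_Diff_le:
  assumes "finite A" "a \<in> A" "b \<in> A" "a \<noteq> b"
  shows "card (insert x (insert y (A - {a, b}))) \<le> card A"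
proof -
  have "card {a, b} \<le> card A"
    using assms by (intro card_mono) auto
  then have "card (A - {a, b}) + 2 = card A"
    using assms by (simp add: card_Diff_subset)
  then show ?thesis
    using assms(1) by (simp add: card_insert_if)
qed

lemma zd_isolated_replace_pair:
  fixes D :: "'a::comm_ring_1 set"
  assumes fin: "finite D" and dom: "zd_dominating D"
    and d: "d \<in> zd_isolated D" and d': "d' \<in> zd_isolated D" "d' \<noteq> d"
    and z: "z * d = 0" "d' * z \<noteq> 0" and w: "w * d' = 0" "d * w \<noteq> 0"
  obtains D' where "finite D'" "zd_dominating D'" "card D' \<le> card D"
    "zd_isolated D' \<subset> zd_isolated D"
proof -
  define x where "x = d' * z"
  define y where "y = d * w"
  have dD: "d \<in> D" and d'D: "d' \<in> D" using d d' zd_isolated_subset by blast+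
  have "d \<noteq> 0" "d' \<noteq> 0" using dom dD d'D unfolding zd_dominating_iff zd_vertices_def by blast+
  moreover have xd: "x * d = 0" unfolding x_def using z by (simp add: mult.assoc)
  moreover have yd': "y * d' = 0" unfolding y_def using w by (simp add: mult.assoc)
  ultimately have xV: "x \<in> zd_vertices" and yV: "y \<in> zd_vertices"
    using zd_verticesI z w unfolding x_def y_def by blast+
  have xD: "x \<notin> D" using zd_isolated_mult_eq_0_notin[OF d] xd by (simp add: mult.commute)
  have yD: "y \<notin> D" using zd_isolated_mult_eq_0_notin[OF d'(1)] yd' by (simp add: mult.commute)
  have xy: "x * y = 0"
  proof -
    have "x * y = (z * d) * (d' * w)" unfolding x_def y_def by (simp add: ac_simps)
    then show ?thesis using z by simp
  qed
  define D' where "D' = insert x (insert y (D - {d, d'}))"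
  have sub: "D' \<subseteq> zd_vertices"
    using dom xV yV unfolding D'_def zd_dominating_iff by blast
  have ann: "\<exists>g\<in>D'. \<forall>v. v * f = 0 \<longrightarrow> v * g = 0" if "f \<in> D - D'" for f
  proof -
    have "f = d \<or> f = d'" using that unfolding D'_def by blast
    then show ?thesis unfolding D'_def x_def y_def by (auto simp: mult.assoc[symmetric])
  qed
  have removed: "\<exists>g\<in>D'. f * g = 0" if "f \<in> zd_isolated D - D'" for f
  proof -
    have "f = d \<or> f = d'" using that unfolding D'_def zd_isolated_def by blast
    then show ?thesis using xd yd' unfolding D'_def by (auto simp: mult.commute)
  qed
  have new: "\<exists>g\<in>D'. e * g = 0" if "e \<in> D' - D" for e
    using that xy unfolding D'_def by (auto simp: mult.commute)
  have "zd_dominating D'" "zd_isolated D' \<subset> zd_isolated D"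
    using zd_dominating_exchange[OF dom sub ann removed new d, of x] xd
    unfolding D'_def by (auto simp: mult.commute)
  moreover have "card D' \<le> card D"
    unfolding D'_def using card_insert_insert_Diff_le[OF fin dD d'D] d'(2) by simp
  ultimately show thesis
    using that[of D'] fin unfolding D'_def by simp
qed

lemma zd_isolated_replace:
  fixes D :: "'a::comm_ring_1 set"
  assumes fin: "finite D" and dom: "zd_dominating D" and d: "d \<in> zd_isolated D"
    and d': "d' \<in> D" "d' \<noteq> d"
  obtains D' where "finite D'" "zd_dominating D'" "card D' \<le> card D"
    "zd_isolated D' \<subset> zd_isolated D"
proof (cases "\<forall>v. v * d = 0 \<longrightarrow> v * d' = 0")
  case True
  show thesis by (rule zd_isolated_replace_by_neighbour[OF fin dom d d' True that])
next
  case False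
  then obtain z where z: "z * d = 0" "d' * z \<noteq> 0" by (auto simp: mult.commute)
  show thesis
  proof (cases "d' \<in> zd_isolated D")
    case False
    show thesis by (rule zd_isolated_replace_by_multiple[OF fin dom d d'(1) False z that])
  next
    case d'_isolated: True
    have dD: "d \<in> D" using d zd_isolated_subset by blast
    show thesis
    proof (cases "\<forall>v. v * d' = 0 \<longrightarrow> v * d = 0")
      case True
      show thesis
        by (rule zd_isolated_replace_by_neighbour[OF fin dom d'_isolated dD d'(2)[symmetric] True that])
    next
      case False
      then obtain w where w: "w * d' = 0" "d * w \<noteq> 0" by (auto simp: mult.commute)
      show thesis by (rule zd_isolated_replace_pair[OF fin dom d d'_isolated d'(2) z w that])
    qed
  qed
qed

lemma zd_isolated_shrink:
  fixes D :: "'a::comm_ring_1 set"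
  assumes fin: "finite D" and dom: "zd_dominating D" and d: "d \<in> zd_isolated D"
  obtains D' where "finite D'" "zd_dominating D'" "card D' \<le> max 2 (card D)"
    "zd_isolated D' \<subset> zd_isolated D"
proof (cases "D = {d}")
  case True
  obtain D' where "finite D'" "zd_dominating D'" "card D' \<le> Suc (card D)"
    "zd_isolated D' \<subset> zd_isolated D"
    using zd_isolated_insert_neighbour[OF fin dom d] by blast
  then show thesis using that[of D'] True by simp
next
  case False
  then obtain d' where "d' \<in> D" "d' \<noteq> d" using d zd_isolated_subset by blast
  then obtain D' where "finite D'" "zd_dominating D'" "card D' \<le> card D"
    "zd_isolated D' \<subset> zd_isolated D"
    using zd_isolated_replace[OF fin dom d] by blast
  then show thesis using that[of D'] by simp
qed

lemma zd_total_dominating_from_dominating: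
  fixes D :: "'a::comm_ring_1 set"
  shows "finite D \<Longrightarrow> zd_dominating D \<Longrightarrow>
    \<exists>T :: 'a set. finite T \<and> zd_total_dominating T \<and> card T \<le> max 2 (card D)"
proof (induction "card (zd_isolated D)" arbitrary: D rule: less_induct)
  case (less D)
  show ?case
  proof (cases "zd_isolated D = {}")
    case True
    then have "finite D \<and> zd_total_dominating D \<and> card D \<le> max 2 (card D)"
      using less.prems by (simp add: zd_total_dominating_iff)
    then show ?thesis by (rule exI)
  next
    case False
    then obtain d where "d \<in> zd_isolated D" by blast
    then obtain D' where D': "finite D'" "zd_dominating D'" "card D' \<le> max 2 (card D)"
      "zd_isolated D' \<subset> zd_isolated D"
      using zd_isolated_shrink[OF less.prems] by blast
    have "finite (zd_isolated D)"
      using less.prems(1) zd_isolated_subset by (rule finite_subset[rotated])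
    then have "card (zd_isolated D') < card (zd_isolated D)"
      using D'(4) by (rule psubset_card_mono)
    then obtain T :: "'a set" where T: "finite T" "zd_total_dominating T" "card T \<le> max 2 (card D')"
      using less.hyps[OF _ D'(1,2)] by blast
    have "card T \<le> max 2 (card D)"
      using T(3) D'(3) by simp
    then show ?thesis
      using T(1,2) by blast
  qed
qed

lemma zd_gamma_le_gamma_t: "zd_gamma R \<le> zd_gamma_t R"
  unfolding zd_gamma_def zd_gamma_t_def
  by (rule INF_superset_mono) (auto simp: zd_total_dominating_iff)

lemma zd_gamma_t_le_max_2_gamma:
  fixes R :: "'a::comm_ring_1 itself"
  shows "zd_gamma_t R \<le> max 2 (zd_gamma R)"
proof (cases "zd_gamma R = \<infinity>")
  case True
  then show ?thesis by simp
next
  case False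
  let ?S = "(\<lambda>X. enat (card X)) ` {X :: 'a set. zd_dominating X \<and> finite X}"
  have "?S \<noteq> {}"
    using False unfolding zd_gamma_def by (metis Inf_empty top_enat_def)
  then obtain k where "k \<in> ?S" by blast
  then have "Inf ?S \<in> ?S" by (rule wellorder_InfI)
  then obtain D :: "'a set" where D: "zd_dominating D" "finite D" "zd_gamma R = enat (card D)"
    unfolding zd_gamma_def by blast
  obtain T :: "'a set" where T: "finite T" "zd_total_dominating T" "card T \<le> max 2 (card D)"
    using zd_total_dominating_from_dominating[OF D(2,1)] by blast
  have "zd_gamma_t R \<le> enat (card T)"
    unfolding zd_gamma_t_def by (rule INF_lower) (simp add: T(1,2))
  also have "\<dots> \<le> max 2 (enat (card D))"
    using T(3) by (simp add: numeral_eq_enat)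
  finally show ?thesis
    using D(3) by simp
qed

theorem theorem4p2:
  fixes R :: "'a::comm_ring_1 itself"
  assumes "4 \<le> zd_gamma_t R" and "zd_gamma_t R < \<infinity>"
  shows "zd_gamma R = zd_gamma_t R"
proof -
  have "4 \<le> max 2 (zd_gamma R)"
    using assms(1) zd_gamma_t_le_max_2_gamma[of R] by (rule order_trans)
  then have "2 \<le> zd_gamma R"
    using order_trans[of 2 4 "zd_gamma R"] by (simp add: le_max_iff_disj)
  then have "zd_gamma_t R \<le> zd_gamma R"
    using zd_gamma_t_le_max_2_gamma[of R] by (simp add: max_absorb2)
  then show ?thesis
    using zd_gamma_le_gamma_t[of R] by (rule antisym[rotated])
qed

end
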